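(* Let $(X,D)$ be a JS-metric space with a partial order $\le$ and let $F:X^2\to X$ have the mixed monotone property and satisfy, for some $k\in[0,1)$, $D(F(x,y),F(u,v))+D(F(y,x),F(v,u))\le k[D(x,u)+D(y,v)]$ for all $x\ge u$, $y\le v$. Let $w$ and $\tilde z$ be coupled fixed points of $F$ that are incomparable in $X^2$, and suppose there exists $z^*\in X^2$ which is an upper bound or a lower bound of both $w$ and $\tilde z$ in $X^2$, with $D_+(w,z^* )<\infty$ and $D_+(\tilde z,z^* )<\infty$. Then $w=\tilde z$.
   Context: Arithmetic is carried out in the extended reals. $(X,D)$ is a JS-metric space: $D:X\times X\to[0,\infty]$ satisfies (D1) $D(x,y)=0\Rightarrow x=y$; (D2) $D(x,y)=D(y,x)$; (D3) there exists $c>0$ such that for all $x,y\in X$ and every sequence $(x_n)$ with $\lim_n D(x_n,x)=0$, $D(x,y)\le c\limsup_n D(x_n,y)$. $D_+((x,y),(u,v))=D(x,u)+D(y,v)$. Partial order on $X^2$: $(u,v)\le(x,y)\iff u\le x$ and $v\ge y$; comparable means one is $\le$ the other. Mixed monotone property: $x_1\le x_2\Rightarrow F(x_1,y)\le F(x_2,y)$ and $y_1\le y_2\Rightarrow F(x,y_1)\ge F(x,y_2)$. A coupled fixed point is $(x,y)$ with $x=F(x,y)$, $y=F(y,x)$. *)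

theory Defs
  imports "HOL-Analysis.Analysis"
begin

definition JS_metric :: "('a \<Rightarrow> 'a \<Rightarrow> ennreal) \<Rightarrow> bool" where
  "JS_metric D \<longleftrightarrow>
     (\<forall>x y. D x y = 0 \<longrightarrow> x = y) \<and>
     (\<forall>x y. D x y = D y x) \<and>
     (\<exists>c::real. c > 0 \<and>
        (\<forall>x y (xs :: nat \<Rightarrow> 'a). (\<lambda>n. D (xs n) x) \<longlonglongrightarrow> 0 \<longrightarrow>
             D x y \<le> ennreal c * limsup (\<lambda>n. D (xs n) y)))"

definition D_plus :: "('a \<Rightarrow> 'a \<Rightarrow> ennreal) \<Rightarrow> 'a \<times> 'a \<Rightarrow> 'a \<times> 'a \<Rightarrow> ennreal" where
  "D_plus D p q = D (fst p) (fst q) + D (snd p) (snd q)"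

definition le2 :: "'a::order \<times> 'a \<Rightarrow> 'a \<times> 'a \<Rightarrow> bool" where
  "le2 p q \<longleftrightarrow> fst p \<le> fst q \<and> snd q \<le> snd p"

definition comparable2 :: "'a::order \<times> 'a \<Rightarrow> 'a \<times> 'a \<Rightarrow> bool" where
  "comparable2 p q \<longleftrightarrow> le2 p q \<or> le2 q p"

definition mixed_monotone :: "('a::order \<Rightarrow> 'a \<Rightarrow> 'a) \<Rightarrow> bool" where
  "mixed_monotone F \<longleftrightarrow>
     (\<forall>x1 x2 y. x1 \<le> x2 \<longrightarrow> F x1 y \<le> F x2 y) \<and>
     (\<forall>x y1 y2. y1 \<le> y2 \<longrightarrow> F x y2 \<le> F x y1)"

definition coupled_fixed_point :: "('a \<Rightarrow> 'a \<Rightarrow> 'a) \<Rightarrow> 'a \<times> 'a \<Rightarrow> bool" where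
  "coupled_fixed_point F p \<longleftrightarrow> fst p = F (fst p) (snd p) \<and> snd p = F (snd p) (fst p)"

end

theory Submission
  imports Defs
begin

text \<open>
  A coupled fixed point of \<open>F\<close> is a fixed point of \<open>T(x, y) = (F x y, F y x)\<close>. By the mixed
  monotone property \<open>T\<close> is monotone for the product order on \<open>X\<^sup>2\<close>, so every iterate
  \<open>T\<^sup>n z\<^sup>*\<close> stays comparable with both coupled fixed points, and on comparable pairs the contraction
  condition says \<open>D\<^sub>+ (T p) (T q) \<le> k D\<^sub>+ p q\<close>. As \<open>D\<^sub>+ w z\<^sup>*\<close> and \<open>D\<^sub>+ z z\<^sup>*\<close> are finite, the iterates
  converge to both \<open>w\<close> and \<open>z\<close>, and limits in a JS-metric space are unique.
\<close>

definition coupled_map :: "('a \<Rightarrow> 'a \<Rightarrow> 'a) \<Rightarrow> 'a \<times> 'a \<Rightarrow> 'a \<times> 'a" where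
  "coupled_map F p = (F (fst p) (snd p), F (snd p) (fst p))"

lemma coupled_fixed_point_iff: "coupled_fixed_point F p \<longleftrightarrow> coupled_map F p = p"
  unfolding coupled_fixed_point_def coupled_map_def by (cases p) auto

lemma JS_metric_sym: "JS_metric D \<Longrightarrow> D x y = D y x"
  unfolding JS_metric_def by blast

lemma D_plus_sym: "JS_metric D \<Longrightarrow> D_plus D p q = D_plus D q p"
  unfolding D_plus_def by (simp add: JS_metric_sym)

lemma JS_metric_limit_unique:
  assumes "JS_metric D" and "(\<lambda>n. D (s n) x) \<longlonglongrightarrow> 0" and "(\<lambda>n. D (s n) y) \<longlonglongrightarrow> 0"
  shows "x = y"
proof -
  obtain c :: real where c: "\<And>x y (s :: nat \<Rightarrow> _). (\<lambda>n. D (s n) x) \<longlonglongrightarrow> 0 \<Longrightarrow>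
      D x y \<le> ennreal c * limsup (\<lambda>n. D (s n) y)"
    using assms(1) unfolding JS_metric_def by metis
  have "D x y \<le> ennreal c * limsup (\<lambda>n. D (s n) y)" by (rule c[OF assms(2)])
  also have "limsup (\<lambda>n. D (s n) y) = 0" using assms(3) by (simp add: lim_imp_Limsup)
  finally show ?thesis using assms(1) unfolding JS_metric_def by simp
qed

lemma D_plus_limit_unique:
  assumes "JS_metric D" and "(\<lambda>n. D_plus D (s n) p) \<longlonglongrightarrow> 0" and "(\<lambda>n. D_plus D (s n) q) \<longlonglongrightarrow> 0"
  shows "p = q"
proof -
  have fst: "(\<lambda>n. D (fst (s n)) (fst r)) \<longlonglongrightarrow> 0"
    and snd: "(\<lambda>n. D (snd (s n)) (snd r)) \<longlonglongrightarrow> 0"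
    if "(\<lambda>n. D_plus D (s n) r) \<longlonglongrightarrow> 0" for r
    by (rule tendsto_sandwich[OF _ _ tendsto_const that]; simp add: D_plus_def)+
  have "fst p = fst q" by (rule JS_metric_limit_unique[OF assms(1) fst[OF assms(2)] fst[OF assms(3)]])
  moreover have "snd p = snd q"
    by (rule JS_metric_limit_unique[OF assms(1) snd[OF assms(2)] snd[OF assms(3)]])
  ultimately show ?thesis by (simp add: prod_eq_iff)
qed

lemma ennreal_geometric_tendsto_zero:
  fixes d :: "nat \<Rightarrow> ennreal"
  assumes step: "\<And>n. d (Suc n) \<le> ennreal k * d n" and "d 0 < \<infinity>" and "0 \<le> k" "k < 1"
  shows "d \<longlonglongrightarrow> 0"
proof -
  have bound: "d n \<le> ennreal (k ^ n) * d 0" for n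
  proof (induction n)
    case (Suc n)
    have "d (Suc n) \<le> ennreal k * (ennreal (k ^ n) * d 0)"
      using step[of n] Suc by (meson order.trans mult_left_mono zero_le)
    also have "\<dots> = ennreal (k ^ Suc n) * d 0" using \<open>0 \<le> k\<close> by (simp add: ennreal_mult mult.assoc)
    finally show ?case .
  qed simp
  obtain r where r: "d 0 = ennreal r" "0 \<le> r" using \<open>d 0 < \<infinity>\<close> by (cases "d 0") auto
  have "(\<lambda>n. k ^ n * r) \<longlonglongrightarrow> 0 * r"
    by (intro tendsto_mult LIMSEQ_power_zero tendsto_const) (use assms in auto)
  then have "(\<lambda>n. ennreal (k ^ n * r)) \<longlonglongrightarrow> 0"
    using tendsto_ennrealI by fastforce
  then have "(\<lambda>n. ennreal (k ^ n) * d 0) \<longlonglongrightarrow> 0"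
    using r \<open>0 \<le> k\<close> by (simp add: ennreal_mult)
  from tendsto_sandwich[OF _ _ tendsto_const this] show ?thesis
    using bound by simp
qed

lemma coupled_map_mono:
  assumes "mixed_monotone F" and "le2 p q"
  shows "le2 (coupled_map F p) (coupled_map F q)"
proof -
  have mono1: "\<And>x1 x2 y. x1 \<le> x2 \<Longrightarrow> F x1 y \<le> F x2 y"
    and anti2: "\<And>x y1 y2. y1 \<le> y2 \<Longrightarrow> F x y2 \<le> F x y1"
    using assms(1) unfolding mixed_monotone_def by auto
  obtain u v x y where pq: "p = (u, v)" "q = (x, y)" "u \<le> x" "y \<le> v"
    using assms(2) unfolding le2_def by (cases p, cases q) auto
  have "F u v \<le> F x y" using mono1[OF \<open>u \<le> x\<close>] anti2[OF \<open>y \<le> v\<close>] by (rule order.trans)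
  moreover have "F y x \<le> F v u" using mono1[OF \<open>y \<le> v\<close>] anti2[OF \<open>u \<le> x\<close>] by (rule order.trans)
  ultimately show ?thesis using pq unfolding le2_def coupled_map_def by simp
qed

lemma comparable2_fixed_point_iterates:
  assumes "mixed_monotone F" and "coupled_fixed_point F p" and "comparable2 p q"
  shows "comparable2 p ((coupled_map F ^^ n) q)"
proof (induction n)
  case (Suc n)
  then show ?case
    using coupled_map_mono[OF assms(1)] assms(2) unfolding comparable2_def coupled_fixed_point_iff
    by (metis funpow.simps(2) o_apply)
qed (use assms(3) in simp)

lemma D_plus_coupled_map_contraction:
  assumes "JS_metric D"
    and contr: "\<forall>x y u v. u \<le> x \<and> y \<le> v \<longrightarrow>
           D (F x y) (F u v) + D (F y x) (F v u) \<le> ennreal k * (D x u + D y v)"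
    and "comparable2 p q"
  shows "D_plus D (coupled_map F p) (coupled_map F q) \<le> ennreal k * D_plus D p q"
proof -
  have le: "D_plus D (coupled_map F p) (coupled_map F q) \<le> ennreal k * D_plus D p q"
    if "le2 q p" for p q
    using contr that unfolding le2_def D_plus_def coupled_map_def by simp
  show ?thesis
    using assms(3) le[of q p] le[of p q] D_plus_sym[OF assms(1)] unfolding comparable2_def by metis
qed

lemma coupled_iterates_tendsto_comparable_fixed_point:
  assumes "JS_metric D" and "mixed_monotone F" and "0 \<le> k" "k < 1"
    and contr: "\<forall>x y u v. u \<le> x \<and> y \<le> v \<longrightarrow>
           D (F x y) (F u v) + D (F y x) (F v u) \<le> ennreal k * (D x u + D y v)"
    and "coupled_fixed_point F p" and "comparable2 p q" and "D_plus D p q < \<infinity>"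
  shows "(\<lambda>n. D_plus D ((coupled_map F ^^ n) q) p) \<longlonglongrightarrow> 0"
proof -
  define d where "d n = D_plus D p ((coupled_map F ^^ n) q)" for n
  have "d (Suc n) \<le> ennreal k * d n" for n
    using D_plus_coupled_map_contraction[OF assms(1) contr
        comparable2_fixed_point_iterates[OF assms(2,6,7)]] assms(6)
    unfolding d_def coupled_fixed_point_iff by simp
  then have "d \<longlonglongrightarrow> 0"
    by (rule ennreal_geometric_tendsto_zero) (use assms(3,4,8) d_def in auto)
  then show ?thesis unfolding d_def by (simp add: D_plus_sym[OF assms(1)])
qed

theorem mainTheorem13:
  fixes D :: "'a::order \<Rightarrow> 'a \<Rightarrow> ennreal"
    and F :: "'a \<Rightarrow> 'a \<Rightarrow> 'a"
    and k :: real
    and w z zs :: "'a \<times> 'a"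
  assumes "JS_metric D"
    and "mixed_monotone F"
    and "0 \<le> k" and "k < 1"
    and "\<forall>x y u v. u \<le> x \<and> y \<le> v \<longrightarrow>
           D (F x y) (F u v) + D (F y x) (F v u) \<le> ennreal k * (D x u + D y v)"
    and "coupled_fixed_point F w" and "coupled_fixed_point F z"
    and "\<not> comparable2 w z"
    and "(le2 w zs \<and> le2 z zs) \<or> (le2 zs w \<and> le2 zs z)"
    and "D_plus D w zs < \<infinity>" and "D_plus D z zs < \<infinity>"
  shows "w = z"
proof -
  have "comparable2 w zs" "comparable2 z zs"
    using assms(9) unfolding comparable2_def by auto
  then show ?thesis
    by (intro D_plus_limit_unique[OF assms(1),
          OF coupled_iterates_tendsto_comparable_fixed_point[OF assms(1-5) assms(6) _ assms(10)]
             coupled_iterates_tendsto_comparable_fixed_point[OF assms(1-5) assms(7) _ assms(11)]])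
qed

end
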